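(* Under the setting below, the following formulae hold: \[ \begin{pmatrix}U_2^T\widetilde{U}_1\\ V_2^T\widetilde{V}_1\end{pmatrix} = \sum_{k=0}^{\infty} \mathcal{F}^k \begin{pmatrix}C_1\\ C_2\end{pmatrix}, \qquad \begin{pmatrix}U_1^T\widetilde{U}_2\\ V_1^T\widetilde{V}_2\end{pmatrix} = \sum_{k=0}^{\infty} \mathcal{G}^k \begin{pmatrix}C_3\\ C_4\end{pmatrix}, \] provided that $\|\mathcal{F}\|<1$ and $\|\mathcal{G}\|<1$. Here $\mathcal{F}$ and $\mathcal{G}$ are the linear operators \[ \mathcal{F}\begin{pmatrix}X_1\\ X_2\end{pmatrix} = \begin{pmatrix}F_U^{21}\circ(\Sigma_2\alpha_{22}^T X_1)+F_U^{21}\circ(\alpha_{22}X_2\widetilde\Sigma_1^T)\\ F_V^{21}\circ(\alpha_{22}^T X_1\widetilde\Sigma_1)+F_V^{21}\circ(\Sigma_2^T\alpha_{22}X_2)\end{pmatrix},\qquad \mathcal{G}\begin{pmatrix}X_3\\ X_4\end{pmatrix} = \begin{pmatrix}F_U^{12}\circ(\alpha_{11}X_4\widetilde\Sigma_2^T)+F_U^{12}\circ(\Sigma_1\alpha_{11}^T X_3)\\ F_V^{12}\circ(\Sigma_1^T\alpha_{11}X_4)+F_V^{12}\circ(\alpha_{11}^T X_3\widetilde\Sigma_2)\end{pmatrix}, \] and \begin{align*} C_1&=F_U^{21}\circ(\Sigma_2\alpha_{12}^TU_1^T\widetilde U_1+\alpha_{21}V_1^T\widetilde V_1\widetilde\Sigma_1^T),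 \quad C_2= F_V^{21}\circ(\alpha_{12}^TU_1^T\widetilde U_1\widetilde\Sigma_1+\Sigma_2^T\alpha_{21}V_1^T\widetilde V_1), \\ C_3&=F_U^{12}\circ(\alpha_{12}V_2^T\widetilde V_2\widetilde\Sigma_2^T+\Sigma_1\alpha_{21}^TU_2^T\widetilde U_2) ,\quad C_4= F_V^{12}\circ(\Sigma_1^T\alpha_{12}V_2^T\widetilde V_2+\alpha_{21}^T U_2^T\widetilde U_2\widetilde \Sigma_2), \end{align*} where \[ \alpha=\begin{pmatrix} \alpha_{11} & \alpha_{12} \\ \alpha_{21} & \alpha_{22} \end{pmatrix} \equiv \begin{pmatrix} U_1^T \Delta A V_1 & U_1^T \Delta A V_2 \\ U_2^T \Delta A V_1 & U_2^T \Delta A V_2 \end{pmatrix} =U^T \Delta A V. \]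
   Context: Let $A$ and $\widetilde A=A+\Delta A$ be two $n\times m$ real matrices, $A$ of rank at least $r$, with conformal full SVDs $A=U\Sigma V^T=\begin{pmatrix}U_1 & U_2\end{pmatrix}\begin{pmatrix}\Sigma_1 & \\ & \Sigma_2\end{pmatrix}\begin{pmatrix}V_1^T\\ V_2^T\end{pmatrix}$ and $\widetilde A=\widetilde U\widetilde\Sigma\widetilde V^T=\begin{pmatrix}\widetilde U_1 & \widetilde U_2\end{pmatrix}\begin{pmatrix}\widetilde\Sigma_1 & \\ & \widetilde\Sigma_2\end{pmatrix}\begin{pmatrix}\widetilde V_1^T\\ \widetilde V_2^T\end{pmatrix}$, where $U_1\in\mathbb{R}^{n,r}$, $U_2\in\mathbb{R}^{n,n-r}$, $V_1\in\mathbb{R}^{m,r}$, $V_2\in\mathbb{R}^{m,m-r}$, $\Sigma_1=\mathrm{diag}\{\sigma_1,\dots,\sigma_r\}$, $\Sigma_2$ contains $\sigma_{r+1},\dots,\sigma_{\min\{n,m\}}$ (singular values of $A$ in descending order), and similarly for $\widetilde A$ with singular values $\widetilde\sigma_i$. Assume $\sigma_r-\widetilde\sigma_{r+1}>0$ and $\widetilde\sigma_r-\sigma_{r+1}>0$. Set $\sigma_i=\widetilde\sigma_i=0$ for $i>\min\{n,m\}$. $\circ$ denotes the Hadamard (entrywise) product. $F_U^{12}\in\mathbb{R}^{r,n-r}$ has entries $(F_U^{12})_{i,j-r}=\frac{1}{\widetilde\sigma_j^2-\sigma_i^2}$, $1\le i\le r$, $r+1\le j\le n$; $F_U^{21}\in\mathbb{R}^{n-r,r}$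 has entries $(F_U^{21})_{i-r,j}=\frac{1}{\widetilde\sigma_j^2-\sigma_i^2}$, $r+1\le i\le n$, $1\le j\le r$; $F_V^{12}\in\mathbb{R}^{r,m-r}$ has entries $(F_V^{12})_{i,j-r}=\frac{1}{\widetilde\sigma_j^2-\sigma_i^2}$, $1\le i\le r$, $r+1\le j\le m$; $F_V^{21}\in\mathbb{R}^{m-r,r}$ has entries $(F_V^{21})_{i-r,j}=\frac{1}{\widetilde\sigma_j^2-\sigma_i^2}$, $r+1\le i\le m$, $1\le j\le r$. *)

theory Defs
  imports "HOL-Analysis.Analysis" "Jordan_Normal_Form.DL_Rank"
begin

definition hadamard :: "real mat \<Rightarrow> real mat \<Rightarrow> real mat" (infixl \<open>\<circ>\<^sub>h\<close> 71) where
  "hadamard A B = mat (dim_row A) (dim_col A) (\<lambda>(i,j). A $$ (i,j) * B $$ (i,j))"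

definition is_full_svd :: "nat \<Rightarrow> nat \<Rightarrow> real mat \<Rightarrow> real mat \<Rightarrow> real mat \<Rightarrow> real mat \<Rightarrow> bool" where
  "is_full_svd n m A U S V \<longleftrightarrow>
     A \<in> carrier_mat n m \<and> U \<in> carrier_mat n n \<and> S \<in> carrier_mat n m \<and> V \<in> carrier_mat m m \<and>
     transpose_mat U * U = 1\<^sub>m n \<and> U * transpose_mat U = 1\<^sub>m n \<and>
     transpose_mat V * V = 1\<^sub>m m \<and> V * transpose_mat V = 1\<^sub>m m \<and>
     (\<forall>i<n. \<forall>j<m. i \<noteq> j \<longrightarrow> S $$ (i,j) = 0) \<and>
     (\<forall>i<min n m. 0 \<le> S $$ (i,i)) \<and>
     (\<forall>i j. i \<le> j \<longrightarrow> j < min n m \<longrightarrow> S $$ (j,j) \<le> S $$ (i,i)) \<and>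
     A = U * S * transpose_mat V"

text \<open>The k-th singular value (0-based: sval S k is sigma_(k+1)), set to 0 beyond min(n,m).\<close>
definition sval :: "real mat \<Rightarrow> nat \<Rightarrow> real" where
  "sval S k = (if k < min (dim_row S) (dim_col S) then S $$ (k,k) else 0)"

definition cols_first :: "real mat \<Rightarrow> nat \<Rightarrow> real mat" where
  "cols_first M r = mat (dim_row M) r (\<lambda>(i,j). M $$ (i,j))"
definition cols_last :: "real mat \<Rightarrow> nat \<Rightarrow> real mat" where
  "cols_last M r = mat (dim_row M) (dim_col M - r) (\<lambda>(i,j). M $$ (i,j+r))"
definition block_tl :: "real mat \<Rightarrow> nat \<Rightarrow> real mat" where
  "block_tl M r = mat r r (\<lambda>(i,j). M $$ (i,j))"
definition block_br :: "real mat \<Rightarrow> nat \<Rightarrow> real mat" where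
  "block_br M r = mat (dim_row M - r) (dim_col M - r) (\<lambda>(i,j). M $$ (i+r,j+r))"

text \<open>The matrices F_U^12 (r x (n-r)), F_U^21 ((n-r) x r); for F_V use p = m.\<close>
definition F12 :: "nat \<Rightarrow> nat \<Rightarrow> real mat \<Rightarrow> real mat \<Rightarrow> real mat" where
  "F12 p r S St = mat r (p - r) (\<lambda>(i,j). 1 / ((sval St (r+j))\<^sup>2 - (sval S i)\<^sup>2))"
definition F21 :: "nat \<Rightarrow> nat \<Rightarrow> real mat \<Rightarrow> real mat \<Rightarrow> real mat" where
  "F21 p r S St = mat (p - r) r (\<lambda>(i,j). 1 / ((sval St j)\<^sup>2 - (sval S (r+i))\<^sup>2))"

definition frob :: "real mat \<Rightarrow> real" where
  "frob M = sqrt (\<Sum>i<dim_row M. \<Sum>j<dim_col M. (M $$ (i,j))\<^sup>2)"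
definition pair_norm :: "real mat \<times> real mat \<Rightarrow> real" where
  "pair_norm X = sqrt ((frob (fst X))\<^sup>2 + (frob (snd X))\<^sup>2)"
definition op_norm :: "(real mat \<times> real mat) set \<Rightarrow> (real mat \<times> real mat \<Rightarrow> real mat \<times> real mat) \<Rightarrow> real" where
  "op_norm D T = Sup {pair_norm (T X) | X. X \<in> D \<and> pair_norm X \<le> 1}"

definition mat_sums :: "(nat \<Rightarrow> real mat) \<Rightarrow> real mat \<Rightarrow> bool" where
  "mat_sums f X \<longleftrightarrow> (\<forall>i<dim_row X. \<forall>j<dim_col X. (\<lambda>k. f k $$ (i,j)) sums (X $$ (i,j)))"

end

theory Submission
  imports Defs
begin

text \<open>
  Put X = U2^T Ut1 and Y = V2^T Vt1. Multiplying the singular value relations A V = U S,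
  A^T U = V S^T and their analogues for A + dA against each other, and inserting the identity as
  U1 U1^T + U2 U2^T (likewise for V), gives a Sylvester equation X St1 St1^T - S2 S2^T X = R, where R
  is linear in (X, Y) through a22 plus a term built from a12 and a21; similarly for Y. Both Gram
  matrices are diagonal, so the equation is solved entrywise by dividing by the gaps between squared
  singular values, i.e. by the Hadamard product with FU21 (resp. FV21): this is the fixed point
  equation (X, Y) = \<F> (X, Y) + (C1, C2). As \<F> is linear with operator norm q < 1, unrolling the
  equation N times leaves the remainder \<F>^N (X, Y), of norm at most q^N times that of (X, Y), whence
  the Neumann series. The second pair of identities is the same argument with the two blocks
  exchanged.
\<close>

section \<open>Hadamard products and Frobenius norms\<close>

lemma dim_hadamard[simp]: "dim_row (H \<circ>\<^sub>h R) = dim_row H" "dim_col (H \<circ>\<^sub>h R) = dim_col H"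
  by (simp_all add: hadamard_def)

lemma hadamard_add:
  assumes "dim_row R1 = dim_row H" "dim_col R1 = dim_col H" "dim_row R2 = dim_row H" "dim_col R2 = dim_col H"
  shows "H \<circ>\<^sub>h (R1 + R2) = H \<circ>\<^sub>h R1 + H \<circ>\<^sub>h R2"
  using assms by (intro eq_matI) (auto simp: hadamard_def algebra_simps)

lemma hadamard_sum_swap:
  assumes "dim_row R1 = dim_row H" "dim_col R1 = dim_col H" "dim_row R2 = dim_row H" "dim_col R2 = dim_col H"
    and "dim_row R3 = dim_row H" "dim_col R3 = dim_col H" "dim_row R4 = dim_row H" "dim_col R4 = dim_col H"
  shows "H \<circ>\<^sub>h R1 + H \<circ>\<^sub>h R2 + H \<circ>\<^sub>h (R3 + R4) = H \<circ>\<^sub>h R2 + H \<circ>\<^sub>h R1 + H \<circ>\<^sub>h (R4 + R3)"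
  using assms by (intro eq_matI) (auto simp: hadamard_def algebra_simps)

lemma frob_eq_L2_set: "frob M = L2_set (\<lambda>(i,j). M $$ (i,j)) ({..<dim_row M} \<times> {..<dim_col M})"
  unfolding frob_def L2_set_def by (simp add: sum.cartesian_product case_prod_unfold)

lemma frob_nonneg: "0 \<le> frob M"
  by (simp add: frob_eq_L2_set L2_set_nonneg)

lemma frob_square: "(frob M)\<^sup>2 = (\<Sum>i<dim_row M. \<Sum>j<dim_col M. (M $$ (i,j))\<^sup>2)"
  unfolding frob_def by (simp add: sum_nonneg)

lemma abs_index_le_frob:
  assumes "i < dim_row M" "j < dim_col M"
  shows "\<bar>M $$ (i,j)\<bar> \<le> frob M"
proof -
  have "\<bar>M $$ (i,j)\<bar> \<le> L2_set (\<lambda>(i,j). \<bar>M $$ (i,j)\<bar>) ({..<dim_row M} \<times> {..<dim_col M})"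
    using assms member_le_L2_set[of _ "(i,j)" "\<lambda>(i,j). \<bar>M $$ (i,j)\<bar>"] by simp
  also have "\<dots> = frob M"
    unfolding frob_eq_L2_set L2_set_def by (simp add: case_prod_unfold)
  finally show ?thesis .
qed

lemma frob_add_le:
  assumes "dim_row M = dim_row N" "dim_col M = dim_col N"
  shows "frob (M + N) \<le> frob M + frob N"
proof -
  have "frob (M + N) = L2_set (\<lambda>x. (\<lambda>(i,j). M $$ (i,j)) x + (\<lambda>(i,j). N $$ (i,j)) x) ({..<dim_row M} \<times> {..<dim_col M})"
    unfolding frob_eq_L2_set using assms by (intro L2_set_cong) auto
  also have "\<dots> \<le> frob M + frob N"
    unfolding frob_eq_L2_set assms by (rule L2_set_triangle_ineq)
  finally show ?thesis .
qed

lemma frob_smult: "frob (k \<cdot>\<^sub>m M) = \<bar>k\<bar> * frob M"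
proof -
  have "(frob (k \<cdot>\<^sub>m M))\<^sup>2 = (\<bar>k\<bar> * frob M)\<^sup>2"
    by (simp add: frob_square power_mult_distrib sum_distrib_left)
  then show ?thesis
    by (simp add: frob_nonneg power2_eq_iff_nonneg)
qed

lemma frob_mult_le:
  assumes "dim_col A = dim_row B"
  shows "frob (A * B) \<le> frob A * frob B"
proof (rule power2_le_imp_le)
  have "(frob (A * B))\<^sup>2 = (\<Sum>i<dim_row A. \<Sum>j<dim_col B. (\<Sum>k<dim_row B. A $$ (i,k) * B $$ (k,j))\<^sup>2)"
    unfolding frob_square using assms by (auto simp: scalar_prod_def atLeast0LessThan intro!: sum.cong)
  also have "\<dots> \<le> (\<Sum>i<dim_row A. \<Sum>j<dim_col B. (\<Sum>k<dim_row B. (A $$ (i,k))\<^sup>2) * (\<Sum>k<dim_row B. (B $$ (k,j))\<^sup>2))"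
    by (intro sum_mono Cauchy_Schwarz_ineq_sum)
  also have "\<dots> = (\<Sum>i<dim_row A. \<Sum>k<dim_row B. (A $$ (i,k))\<^sup>2) * (\<Sum>j<dim_col B. \<Sum>k<dim_row B. (B $$ (k,j))\<^sup>2)"
    by (simp add: sum_product)
  also have "\<dots> = (frob A * frob B)\<^sup>2"
    unfolding power_mult_distrib frob_square assms by (simp add: sum.swap[of _ "{..<dim_col B}"])
  finally show "(frob (A * B))\<^sup>2 \<le> (frob A * frob B)\<^sup>2" .
qed (simp add: frob_nonneg)

lemma frob_hadamard_le:
  assumes "dim_row R = dim_row H" "dim_col R = dim_col H"
  shows "frob (H \<circ>\<^sub>h R) \<le> frob H * frob R"
proof (rule power2_le_imp_le)
  have "(frob (H \<circ>\<^sub>h R))\<^sup>2 = (\<Sum>i<dim_row H. \<Sum>j<dim_col H. (H $$ (i,j))\<^sup>2 * (R $$ (i,j))\<^sup>2)"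
    unfolding frob_square hadamard_def by (simp add: power_mult_distrib)
  also have "\<dots> \<le> (\<Sum>i<dim_row H. \<Sum>j<dim_col H. (frob H)\<^sup>2 * (R $$ (i,j))\<^sup>2)"
  proof (intro sum_mono mult_right_mono)
    fix i j assume "i \<in> {..<dim_row H}" "j \<in> {..<dim_col H}"
    then show "(H $$ (i,j))\<^sup>2 \<le> (frob H)\<^sup>2"
      using power_mono[OF abs_index_le_frob abs_ge_zero, of i H j 2] by simp
  qed simp
  also have "\<dots> = (frob H * frob R)\<^sup>2"
    unfolding power_mult_distrib frob_square[of R] assms by (simp add: sum_distrib_left)
  finally show "(frob (H \<circ>\<^sub>h R))\<^sup>2 \<le> (frob H * frob R)\<^sup>2" .
qed (simp add: frob_nonneg)

definition pair_smult :: "real \<Rightarrow> real mat \<times> real mat \<Rightarrow> real mat \<times> real mat" where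
  "pair_smult k Z = (k \<cdot>\<^sub>m fst Z, k \<cdot>\<^sub>m snd Z)"

lemma frob_le_pair_norm: "frob (fst Z) \<le> pair_norm Z" "frob (snd Z) \<le> pair_norm Z"
  unfolding pair_norm_def by (auto intro!: real_le_rsqrt simp: frob_nonneg)

lemma pair_norm_nonneg: "0 \<le> pair_norm Z"
  by (simp add: pair_norm_def)

lemma pair_norm_le_frob_add: "pair_norm Z \<le> frob (fst Z) + frob (snd Z)"
  unfolding pair_norm_def by (intro sqrt_sum_squares_le_sum frob_nonneg)

lemma pair_norm_smult: "pair_norm (pair_smult k Z) = \<bar>k\<bar> * pair_norm Z"
  unfolding pair_norm_def pair_smult_def
  by (simp add: frob_smult power_mult_distrib real_sqrt_mult flip: distrib_left)

lemma pair_norm_eq_0_imp_smult_0: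
  assumes "pair_norm Z = 0"
  shows "pair_smult 0 Z = Z"
proof -
  have "frob (fst Z) = 0" "frob (snd Z) = 0"
    using assms frob_le_pair_norm[of Z] frob_nonneg[of "fst Z"] frob_nonneg[of "snd Z"] by linarith+
  then have "M $$ (i,j) = 0" if "M \<in> {fst Z, snd Z}" "i < dim_row M" "j < dim_col M" for M i j
    using that abs_index_le_frob[of i M j] by auto
  then show ?thesis
    unfolding pair_smult_def by (cases Z) (auto intro!: eq_matI)
qed

section \<open>Bounded linear maps on pairs of matrices and the Neumann series\<close>

definition mat_bounded_linear_on ::
    "(real mat \<times> real mat) set \<Rightarrow> nat \<Rightarrow> nat \<Rightarrow> (real mat \<times> real mat \<Rightarrow> real mat) \<Rightarrow> bool" where
  "mat_bounded_linear_on D a b f \<longleftrightarrow>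
     (\<forall>Z\<in>D. f Z \<in> carrier_mat a b) \<and>
     (\<forall>Y\<in>D. \<forall>Z\<in>D. f (Y + Z) = f Y + f Z) \<and>
     (\<forall>Z\<in>D. \<forall>k. f (pair_smult k Z) = k \<cdot>\<^sub>m f Z) \<and>
     (\<exists>K. \<forall>Z\<in>D. frob (f Z) \<le> K * pair_norm Z)"

lemma mat_bounded_linear_onI:
  assumes "\<And>Z. Z \<in> D \<Longrightarrow> f Z \<in> carrier_mat a b"
    and "\<And>Y Z. Y \<in> D \<Longrightarrow> Z \<in> D \<Longrightarrow> f (Y + Z) = f Y + f Z"
    and "\<And>Z k. Z \<in> D \<Longrightarrow> f (pair_smult k Z) = k \<cdot>\<^sub>m f Z"
    and "\<And>Z. Z \<in> D \<Longrightarrow> frob (f Z) \<le> K * pair_norm Z"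
  shows "mat_bounded_linear_on D a b f"
  unfolding mat_bounded_linear_on_def using assms by blast

lemma mat_bounded_linear_onD:
  assumes "mat_bounded_linear_on D a b f"
  shows "Z \<in> D \<Longrightarrow> f Z \<in> carrier_mat a b"
    and "Y \<in> D \<Longrightarrow> Z \<in> D \<Longrightarrow> f (Y + Z) = f Y + f Z"
    and "Z \<in> D \<Longrightarrow> f (pair_smult k Z) = k \<cdot>\<^sub>m f Z"
    and "\<exists>K. \<forall>Z\<in>D. frob (f Z) \<le> K * pair_norm Z"
  using assms unfolding mat_bounded_linear_on_def by blast+

lemma mat_bounded_linear_on_fst:
  "mat_bounded_linear_on (carrier_mat a b \<times> carrier_mat c d) a b fst"
  by (rule mat_bounded_linear_onI[where K = 1]) (auto simp: pair_smult_def frob_le_pair_norm)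

lemma mat_bounded_linear_on_snd:
  "mat_bounded_linear_on (carrier_mat a b \<times> carrier_mat c d) c d snd"
  by (rule mat_bounded_linear_onI[where K = 1]) (auto simp: pair_smult_def frob_le_pair_norm)

lemma mat_bounded_linear_on_mult_left:
  assumes f: "mat_bounded_linear_on D c b f" and M: "M \<in> carrier_mat a c"
  shows "mat_bounded_linear_on D a b (\<lambda>Z. M * f Z)"
proof -
  note f_lin = mat_bounded_linear_onD[OF f]
  obtain K where K: "\<forall>Z\<in>D. frob (f Z) \<le> K * pair_norm Z"
    using f_lin(4) by blast
  show ?thesis
  proof (rule mat_bounded_linear_onI[where K = "frob M * K"])
    fix Z assume Z: "Z \<in> D"
    have "frob (M * f Z) \<le> frob M * frob (f Z)"
      using M f_lin(1)[OF Z] by (intro frob_mult_le) auto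
    also have "\<dots> \<le> frob M * (K * pair_norm Z)"
      using K Z by (intro mult_left_mono frob_nonneg) auto
    finally show "frob (M * f Z) \<le> frob M * K * pair_norm Z" by simp
  next
    fix Z k assume Z: "Z \<in> D"
    show "M * f (pair_smult k Z) = k \<cdot>\<^sub>m (M * f Z)"
      using mult_smult_distrib[OF M f_lin(1)[OF Z]] f_lin(3)[OF Z] by simp
  next
    fix Y Z assume Y: "Y \<in> D" and Z: "Z \<in> D"
    show "M * f (Y + Z) = M * f Y + M * f Z"
      using mult_add_distrib_mat[OF M f_lin(1)[OF Y] f_lin(1)[OF Z]] f_lin(2)[OF Y Z] by simp
  qed (use M f_lin(1) in simp)
qed

lemma mat_bounded_linear_on_mult_right:
  assumes f: "mat_bounded_linear_on D a c f" and N: "N \<in> carrier_mat c b"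
  shows "mat_bounded_linear_on D a b (\<lambda>Z. f Z * N)"
proof -
  note f_lin = mat_bounded_linear_onD[OF f]
  obtain K where K: "\<forall>Z\<in>D. frob (f Z) \<le> K * pair_norm Z"
    using f_lin(4) by blast
  show ?thesis
  proof (rule mat_bounded_linear_onI[where K = "K * frob N"])
    fix Z assume Z: "Z \<in> D"
    have "frob (f Z * N) \<le> frob (f Z) * frob N"
      using N f_lin(1)[OF Z] by (intro frob_mult_le) auto
    also have "\<dots> \<le> (K * pair_norm Z) * frob N"
      using K Z by (intro mult_right_mono frob_nonneg) auto
    finally show "frob (f Z * N) \<le> K * frob N * pair_norm Z" by (simp add: mult_ac)
  next
    fix Z k assume Z: "Z \<in> D"
    show "f (pair_smult k Z) * N = k \<cdot>\<^sub>m (f Z * N)"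
      using mult_smult_assoc_mat[OF f_lin(1)[OF Z] N] f_lin(3)[OF Z] by simp
  next
    fix Y Z assume Y: "Y \<in> D" and Z: "Z \<in> D"
    show "f (Y + Z) * N = f Y * N + f Z * N"
      using add_mult_distrib_mat[OF f_lin(1)[OF Y] f_lin(1)[OF Z] N] f_lin(2)[OF Y Z] by simp
  next
    fix Z assume "Z \<in> D"
    then show "f Z * N \<in> carrier_mat a b"
      using N f_lin(1) by (meson mult_carrier_mat)
  qed
qed

lemma mat_bounded_linear_on_hadamard:
  assumes f: "mat_bounded_linear_on D a b f" and H: "H \<in> carrier_mat a b"
  shows "mat_bounded_linear_on D a b (\<lambda>Z. H \<circ>\<^sub>h f Z)"
proof -
  note f_lin = mat_bounded_linear_onD[OF f]
  obtain K where K: "\<forall>Z\<in>D. frob (f Z) \<le> K * pair_norm Z"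
    using f_lin(4) by blast
  show ?thesis
  proof (rule mat_bounded_linear_onI[where K = "frob H * K"])
    fix Z assume Z: "Z \<in> D"
    have "frob (H \<circ>\<^sub>h f Z) \<le> frob H * frob (f Z)"
      using H f_lin(1)[OF Z] by (intro frob_hadamard_le) auto
    also have "\<dots> \<le> frob H * (K * pair_norm Z)"
      using K Z by (intro mult_left_mono frob_nonneg) auto
    finally show "frob (H \<circ>\<^sub>h f Z) \<le> frob H * K * pair_norm Z" by simp
  next
    fix Z k assume Z: "Z \<in> D"
    show "H \<circ>\<^sub>h f (pair_smult k Z) = k \<cdot>\<^sub>m (H \<circ>\<^sub>h f Z)"
      using H f_lin(1)[OF Z] f_lin(3)[OF Z] by (auto simp: hadamard_def intro!: eq_matI)
  next
    fix Y Z assume Y: "Y \<in> D" and Z: "Z \<in> D"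
    show "H \<circ>\<^sub>h f (Y + Z) = H \<circ>\<^sub>h f Y + H \<circ>\<^sub>h f Z"
      using H f_lin(1)[OF Y] f_lin(1)[OF Z] f_lin(2)[OF Y Z]
      by (auto simp: hadamard_def algebra_simps intro!: eq_matI)
  qed (use H in \<open>simp add: hadamard_def\<close>)
qed

lemma mat_bounded_linear_on_add:
  assumes f: "mat_bounded_linear_on D a b f" and g: "mat_bounded_linear_on D a b g"
  shows "mat_bounded_linear_on D a b (\<lambda>Z. f Z + g Z)"
proof -
  note f_lin = mat_bounded_linear_onD[OF f] and g_lin = mat_bounded_linear_onD[OF g]
  obtain K L where K: "\<forall>Z\<in>D. frob (f Z) \<le> K * pair_norm Z" and L: "\<forall>Z\<in>D. frob (g Z) \<le> L * pair_norm Z"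
    using f_lin(4) g_lin(4) by blast
  show ?thesis
  proof (rule mat_bounded_linear_onI[where K = "K + L"])
    fix Z assume Z: "Z \<in> D"
    have "frob (f Z + g Z) \<le> frob (f Z) + frob (g Z)"
      using f_lin(1)[OF Z] g_lin(1)[OF Z] by (intro frob_add_le) auto
    also have "\<dots> \<le> (K + L) * pair_norm Z"
      using K L Z by (simp add: add_mono distrib_right)
    finally show "frob (f Z + g Z) \<le> (K + L) * pair_norm Z" .
  next
    fix Z k assume Z: "Z \<in> D"
    show "f (pair_smult k Z) + g (pair_smult k Z) = k \<cdot>\<^sub>m (f Z + g Z)"
      using add_smult_distrib_left_mat[OF f_lin(1)[OF Z] g_lin(1)[OF Z]] f_lin(3)[OF Z] g_lin(3)[OF Z]
      by simp
  next
    fix Y Z assume "Y \<in> D" "Z \<in> D"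
    then have "f Y \<in> carrier_mat a b" "f Z \<in> carrier_mat a b" "g Y \<in> carrier_mat a b" "g Z \<in> carrier_mat a b"
      using f_lin(1) g_lin(1) by auto
    then show "f (Y + Z) + g (Y + Z) = f Y + g Y + (f Z + g Z)"
      using \<open>Y \<in> D\<close> \<open>Z \<in> D\<close> f_lin(2) g_lin(2) by (auto intro!: eq_matI)
  next
    fix Z assume "Z \<in> D"
    then show "f Z + g Z \<in> carrier_mat a b"
      using f_lin(1) g_lin(1) by simp
  qed
qed

lemmas mat_bounded_linear_on_intros = mat_bounded_linear_on_add mat_bounded_linear_on_hadamard
  mat_bounded_linear_on_mult_left mat_bounded_linear_on_mult_right
  mat_bounded_linear_on_fst mat_bounded_linear_on_snd

lemma op_norm_upper:
  assumes bdd: "\<exists>K. \<forall>Z\<in>D. pair_norm (T Z) \<le> K * pair_norm Z" and "Z \<in> D" "pair_norm Z \<le> 1"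
  shows "pair_norm (T Z) \<le> op_norm D T"
proof -
  obtain K where K: "\<forall>Z\<in>D. pair_norm (T Z) \<le> K * pair_norm Z" using bdd by blast
  have "pair_norm (T Z) \<le> max K 0" if "Z \<in> D" "pair_norm Z \<le> 1" for Z
    using K that pair_norm_nonneg[of Z]
    by (smt (verit, best) max.cobounded1 max.cobounded2 mult_left_le mult_right_mono)
  then have "bdd_above {pair_norm (T X) | X. X \<in> D \<and> pair_norm X \<le> 1}"
    by (auto intro!: bdd_aboveI)
  then show ?thesis
    unfolding op_norm_def using assms(2,3) by (blast intro: cSup_upper)
qed

lemma pair_norm_le_op_norm:
  assumes D: "\<And>Z k. Z \<in> D \<Longrightarrow> pair_smult k Z \<in> D"
    and hom: "\<And>Z k. Z \<in> D \<Longrightarrow> T (pair_smult k Z) = pair_smult k (T Z)"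
    and bdd: "\<exists>K. \<forall>Z\<in>D. pair_norm (T Z) \<le> K * pair_norm Z" and Z: "Z \<in> D"
  shows "pair_norm (T Z) \<le> op_norm D T * pair_norm Z"
proof (cases "pair_norm Z = 0")
  case True
  then have "T Z = pair_smult 0 (T Z)"
    using hom[OF Z, of 0] pair_norm_eq_0_imp_smult_0 by metis
  then show ?thesis
    using True pair_norm_smult[of 0 "T Z"] by simp
next
  case False
  define p where "p = pair_norm Z"
  have p: "p > 0" using False pair_norm_nonneg[of Z] unfolding p_def by linarith
  have "inverse p * pair_norm (T Z) = pair_norm (T (pair_smult (inverse p) Z))"
    using hom[OF Z] p by (simp add: pair_norm_smult)
  also have "\<dots> \<le> op_norm D T"
    using p by (intro op_norm_upper[OF bdd D[OF Z]]) (simp add: pair_norm_smult p_def)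
  finally show ?thesis
    using p unfolding p_def[symmetric] by (simp add: field_simps)
qed

lemma contraction_neumann_series:
  fixes T :: "'a::plus \<Rightarrow> 'a" and \<nu> :: "'a \<Rightarrow> real" and \<phi> :: "'a \<Rightarrow> real"
  assumes T_D: "\<And>Z. Z \<in> D \<Longrightarrow> T Z \<in> D"
    and T_add: "\<And>Y Z. Y \<in> D \<Longrightarrow> Z \<in> D \<Longrightarrow> T (Y + Z) = T Y + T Z"
    and contraction: "\<And>Z. Z \<in> D \<Longrightarrow> \<nu> (T Z) \<le> q * \<nu> Z" and q: "0 \<le> q" "q < 1"
    and \<phi>_add: "\<And>Y Z. Y \<in> D \<Longrightarrow> Z \<in> D \<Longrightarrow> \<phi> (Y + Z) = \<phi> Y + \<phi> Z"
    and \<phi>_bdd: "\<And>Z. Z \<in> D \<Longrightarrow> \<bar>\<phi> Z\<bar> \<le> \<nu> Z"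
    and X: "X \<in> D" and C: "C \<in> D" and fixed: "X = T X + C"
  shows "(\<lambda>k. \<phi> ((T ^^ k) C)) sums \<phi> X"
proof -
  have iter_D: "(T ^^ k) Z \<in> D" if "Z \<in> D" for k Z
    using that T_D by (induction k) auto
  have iter_add: "(T ^^ k) (Y + Z) = (T ^^ k) Y + (T ^^ k) Z" if "Y \<in> D" "Z \<in> D" for k Y Z
    by (induction k) (simp_all add: T_add iter_D that)
  have remainder: "\<phi> X = \<phi> ((T ^^ N) X) + (\<Sum>k<N. \<phi> ((T ^^ k) C))" for N
  proof (induction N)
    case (Suc N)
    have "(T ^^ N) X = (T ^^ Suc N) X + (T ^^ N) C"
      using fixed iter_add[OF T_D[OF X] C, of N] by (metis funpow_Suc_right o_apply)
    then have "\<phi> ((T ^^ N) X) = \<phi> ((T ^^ Suc N) X) + \<phi> ((T ^^ N) C)"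
      using \<phi>_add[OF iter_D[OF X] iter_D[OF C]] by metis
    with Suc.IH show ?case by simp
  qed simp
  have iter_norm: "\<nu> ((T ^^ k) X) \<le> q ^ k * \<nu> X" for k
  proof (induction k)
    case (Suc k)
    have "\<nu> ((T ^^ Suc k) X) \<le> q * \<nu> ((T ^^ k) X)"
      using contraction[OF iter_D[OF X]] by simp
    also have "\<dots> \<le> q * (q ^ k * \<nu> X)"
      using Suc q(1) by (rule mult_left_mono)
    finally show ?case by simp
  qed simp
  have "(\<lambda>k. q ^ k * \<nu> X) \<longlonglongrightarrow> 0"
    using q by (intro tendsto_mult_left_zero LIMSEQ_power_zero) simp
  then have "(\<lambda>N. \<phi> ((T ^^ N) X)) \<longlonglongrightarrow> 0"
    using \<phi>_bdd[OF iter_D[OF X]] iter_norm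
    by (intro Lim_null_comparison[OF _ \<open>(\<lambda>k. q ^ k * \<nu> X) \<longlonglongrightarrow> 0\<close>] always_eventually allI)
      (auto intro: order_trans)
  then have "(\<lambda>N. \<phi> X - \<phi> ((T ^^ N) X)) \<longlonglongrightarrow> \<phi> X"
    using tendsto_diff[OF tendsto_const] by fastforce
  moreover have "\<phi> X - \<phi> ((T ^^ N) X) = (\<Sum>k<N. \<phi> ((T ^^ k) C))" for N
    using remainder[of N] by linarith
  ultimately show ?thesis
    unfolding sums_def by simp
qed

lemma mat_bounded_linear_on_pair_contraction:
  fixes a b c d :: nat and T :: "real mat \<times> real mat \<Rightarrow> real mat \<times> real mat"
  defines "D \<equiv> carrier_mat a b \<times> carrier_mat c d"
  assumes T1: "mat_bounded_linear_on D a b (\<lambda>Z. fst (T Z))"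
    and T2: "mat_bounded_linear_on D c d (\<lambda>Z. snd (T Z))"
  shows "Z \<in> D \<Longrightarrow> pair_norm (T Z) \<le> op_norm D T * pair_norm Z"
    and "0 \<le> op_norm D T"
proof -
  note T1_lin = mat_bounded_linear_onD[OF T1] and T2_lin = mat_bounded_linear_onD[OF T2]
  have T_bdd: "\<exists>K. \<forall>Z\<in>D. pair_norm (T Z) \<le> K * pair_norm Z"
  proof -
    obtain K L where K: "\<forall>Z\<in>D. frob (fst (T Z)) \<le> K * pair_norm Z"
      and L: "\<forall>Z\<in>D. frob (snd (T Z)) \<le> L * pair_norm Z"
      using T1_lin(4) T2_lin(4) by blast
    have "pair_norm (T Z) \<le> (K + L) * pair_norm Z" if "Z \<in> D" for Z
      using pair_norm_le_frob_add[of "T Z"] K L that by (fastforce simp: distrib_right)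
    then show ?thesis by blast
  qed
  show "Z \<in> D \<Longrightarrow> pair_norm (T Z) \<le> op_norm D T * pair_norm Z"
  proof (rule pair_norm_le_op_norm[OF _ _ T_bdd])
    show "pair_smult k Z \<in> D" if "Z \<in> D" for Z k
      using that unfolding D_def pair_smult_def by (simp add: mem_Times_iff)
    show "T (pair_smult k Z) = pair_smult k (T Z)" if "Z \<in> D" for Z k
      using T1_lin(3)[OF that] T2_lin(3)[OF that] by (simp add: prod_eq_iff pair_smult_def)
  qed
  have "pair_norm (T (0\<^sub>m a b, 0\<^sub>m c d)) \<le> op_norm D T"
    by (rule op_norm_upper[OF T_bdd]) (auto simp: D_def pair_norm_def frob_def)
  then show "0 \<le> op_norm D T"
    using pair_norm_nonneg order_trans by blast
qed

lemma neumann_series_mat_pairs: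
  fixes a b c d :: nat and T :: "real mat \<times> real mat \<Rightarrow> real mat \<times> real mat"
  defines "D \<equiv> carrier_mat a b \<times> carrier_mat c d"
  assumes T1: "mat_bounded_linear_on D a b (\<lambda>Z. fst (T Z))"
    and T2: "mat_bounded_linear_on D c d (\<lambda>Z. snd (T Z))"
    and contr: "op_norm D T < 1"
    and X: "X \<in> D" and C: "C \<in> D" and fixed: "X = T X + C"
  shows "mat_sums (\<lambda>k. fst ((T ^^ k) C)) (fst X) \<and> mat_sums (\<lambda>k. snd ((T ^^ k) C)) (snd X)"
proof -
  note T1_lin = mat_bounded_linear_onD[OF T1] and T2_lin = mat_bounded_linear_onD[OF T2]
  note series = contraction_neumann_series[where D = D and T = T and \<nu> = pair_norm and q = "op_norm D T",
      OF _ _ mat_bounded_linear_on_pair_contraction[OF T1[unfolded D_def] T2[unfolded D_def],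
        folded D_def] contr _ _ X C fixed]
  have T_D: "T Z \<in> D" if "Z \<in> D" for Z
    using T1_lin(1)[OF that] T2_lin(1)[OF that] unfolding D_def by (simp add: mem_Times_iff)
  have T_add: "T (Y + Z) = T Y + T Z" if "Y \<in> D" "Z \<in> D" for Y Z
    using T1_lin(2)[OF that] T2_lin(2)[OF that] by (simp add: prod_eq_iff)
  have "(\<lambda>k. fst ((T ^^ k) C) $$ (i,j)) sums (fst X $$ (i,j))" if "i < a" "j < b" for i j
  proof (rule series[where \<phi> = "\<lambda>Z. fst Z $$ (i,j)", OF T_D T_add])
    fix Y Z assume "Z \<in> D"
    then have "fst Z \<in> carrier_mat a b" by (simp add: D_def mem_Times_iff)
    with that show "fst (Y + Z) $$ (i,j) = fst Y $$ (i,j) + fst Z $$ (i,j)"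
      and "\<bar>fst Z $$ (i,j)\<bar> \<le> pair_norm Z"
      using abs_index_le_frob[of i "fst Z" j] frob_le_pair_norm(1)[of Z] by simp_all
  qed
  moreover have "(\<lambda>k. snd ((T ^^ k) C) $$ (i,j)) sums (snd X $$ (i,j))" if "i < c" "j < d" for i j
  proof (rule series[where \<phi> = "\<lambda>Z. snd Z $$ (i,j)", OF T_D T_add])
    fix Y Z assume "Z \<in> D"
    then have "snd Z \<in> carrier_mat c d" by (simp add: D_def mem_Times_iff)
    with that show "snd (Y + Z) $$ (i,j) = snd Y $$ (i,j) + snd Z $$ (i,j)"
      and "\<bar>snd Z $$ (i,j)\<bar> \<le> pair_norm Z"
      using abs_index_le_frob[of i "snd Z" j] frob_le_pair_norm(2)[of Z] by simp_all
  qed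
  moreover have "fst X \<in> carrier_mat a b" "snd X \<in> carrier_mat c d"
    using X unfolding D_def by auto
  ultimately show ?thesis
    unfolding mat_sums_def by auto
qed

section \<open>The Sylvester equation of perturbed singular subspaces\<close>

lemma assoc_mult_mat_dims:
  fixes A B C :: "'a::semiring_0 mat"
  shows "dim_col A = dim_row B \<Longrightarrow> dim_col B = dim_row C \<Longrightarrow> A * B * C = A * (B * C)"
  by (rule assoc_mult_mat[of A "dim_row A" "dim_col A" B "dim_col B" C "dim_col C"]) auto

lemma mult_add_distrib_mat_dims:
  fixes A B C :: "'a::semiring_0 mat"
  shows "dim_col A = dim_row B \<Longrightarrow> dim_row B = dim_row C \<Longrightarrow> dim_col B = dim_col C \<Longrightarrow>
    A * (B + C) = A * B + A * C"
  by (rule mult_add_distrib_mat[of A "dim_row A" "dim_col A" B "dim_col B" C]) auto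

lemma add_mult_distrib_mat_dims:
  fixes A B C :: "'a::semiring_0 mat"
  shows "dim_row A = dim_row B \<Longrightarrow> dim_col A = dim_col B \<Longrightarrow> dim_col A = dim_row C \<Longrightarrow>
    (A + B) * C = A * C + B * C"
  by (rule add_mult_distrib_mat[of A "dim_row A" "dim_col A" B C "dim_col C"]) auto

lemma transpose_mult_dims:
  fixes A B :: "'a::comm_semiring_0 mat"
  shows "dim_col A = dim_row B \<Longrightarrow> (A * B)\<^sup>T = B\<^sup>T * A\<^sup>T"
  by (rule transpose_mult[of A "dim_row A" "dim_col A" B "dim_col B"]) auto

lemma transpose_add_dims:
  fixes A B :: "'a::monoid_add mat"
  shows "dim_row A = dim_row B \<Longrightarrow> dim_col A = dim_col B \<Longrightarrow> (A + B)\<^sup>T = A\<^sup>T + B\<^sup>T"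
  by (rule transpose_add[of A "dim_row A" "dim_col A" B]) auto

text \<open>With the dimensions of all matrices involved in the simpset, these rules normalise matrix
  expressions to right-associated sums of products, transposes pushed to the factors.\<close>
lemmas mat_normalize = assoc_mult_mat_dims mult_add_distrib_mat_dims add_mult_distrib_mat_dims
  transpose_mult_dims transpose_add_dims transpose_transpose

lemma mult_split_identity:
  fixes P P' Z :: "'a::comm_ring_1 mat"
  assumes P: "P \<in> carrier_mat n p" and P': "P' \<in> carrier_mat n p'"
    and split: "P * P\<^sup>T + P' * P'\<^sup>T = 1\<^sub>m n" and Z: "dim_row Z = n"
  shows "Z = P * (P\<^sup>T * Z) + P' * (P'\<^sup>T * Z)"
proof -
  note [simp] = carrier_matD[OF P] carrier_matD[OF P'] Z
  have "Z = (P * P\<^sup>T + P' * P'\<^sup>T) * Z" using split by simp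
  then show ?thesis by (simp add: mat_normalize)
qed

lemma singular_subspaces_sylvester:
  fixes A E P P' Q Q' Pt Qt S St :: "real mat"
  assumes A: "A \<in> carrier_mat n m" and E: "E \<in> carrier_mat n m"
    and P: "P \<in> carrier_mat n p" and P': "P' \<in> carrier_mat n p'"
    and Q: "Q \<in> carrier_mat m q" and Q': "Q' \<in> carrier_mat m q'"
    and Pt: "Pt \<in> carrier_mat n s" and Qt: "Qt \<in> carrier_mat m t"
    and S: "S \<in> carrier_mat p q" and St: "St \<in> carrier_mat s t"
    and AQ: "A * Q = P * S" and AP: "A\<^sup>T * P = Q * S\<^sup>T"
    and AQt: "(A + E) * Qt = Pt * St" and APt: "(A + E)\<^sup>T * Pt = Qt * St\<^sup>T"
    and P_split: "P * P\<^sup>T + P' * P'\<^sup>T = 1\<^sub>m n" and Q_split: "Q * Q\<^sup>T + Q' * Q'\<^sup>T = 1\<^sub>m m"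
  shows "P\<^sup>T * Pt * (St * St\<^sup>T) = S * S\<^sup>T * (P\<^sup>T * Pt)
      + (S * (P\<^sup>T * E * Q)\<^sup>T * (P\<^sup>T * Pt) + P\<^sup>T * E * Q * (Q\<^sup>T * Qt) * St\<^sup>T
         + (S * (P'\<^sup>T * E * Q)\<^sup>T * P'\<^sup>T * Pt + P\<^sup>T * E * Q' * Q'\<^sup>T * Qt * St\<^sup>T))"
proof -
  note dims[simp] = carrier_matD[OF A] carrier_matD[OF E] carrier_matD[OF P] carrier_matD[OF P']
    carrier_matD[OF Q] carrier_matD[OF Q'] carrier_matD[OF Pt] carrier_matD[OF Qt]
    carrier_matD[OF S] carrier_matD[OF St]
  have PA: "P\<^sup>T * (A * Z) = S * (Q\<^sup>T * Z)" if "dim_row Z = m" for Z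
  proof -
    have "P\<^sup>T * A = S * Q\<^sup>T"
      using arg_cong[OF AP, of transpose_mat] by (simp add: mat_normalize)
    then have "P\<^sup>T * A * Z = S * Q\<^sup>T * Z" by simp
    then show ?thesis using that by (simp add: assoc_mult_mat_dims)
  qed
  have QA: "Q\<^sup>T * (A\<^sup>T * Z) = S\<^sup>T * (P\<^sup>T * Z)" if "dim_row Z = n" for Z
  proof -
    have "Q\<^sup>T * A\<^sup>T = S\<^sup>T * P\<^sup>T"
      using arg_cong[OF AQ, of transpose_mat] by (simp add: mat_normalize)
    then have "Q\<^sup>T * A\<^sup>T * Z = S\<^sup>T * P\<^sup>T * Z" by simp
    then show ?thesis using that by (simp add: assoc_mult_mat_dims)
  qed
  have "P\<^sup>T * Pt * (St * St\<^sup>T) = P\<^sup>T * ((A + E) * Qt * St\<^sup>T)"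
    using AQt by (simp add: mat_normalize)
  also have "\<dots> = P\<^sup>T * (A * (Qt * St\<^sup>T)) + P\<^sup>T * (E * (Qt * St\<^sup>T))"
    by (simp add: mat_normalize)
  also have "P\<^sup>T * (A * (Qt * St\<^sup>T)) = S * (Q\<^sup>T * (A\<^sup>T * Pt)) + S * (Q\<^sup>T * (E\<^sup>T * Pt))"
  proof -
    have "Qt * St\<^sup>T = A\<^sup>T * Pt + E\<^sup>T * Pt"
      using APt by (simp add: mat_normalize)
    then show ?thesis
      using PA[of "Qt * St\<^sup>T"] by (simp add: mat_normalize)
  qed
  also have "Q\<^sup>T * (A\<^sup>T * Pt) = S\<^sup>T * (P\<^sup>T * Pt)"
    by (simp add: QA)
  also have "E\<^sup>T * Pt = E\<^sup>T * (P * (P\<^sup>T * Pt) + P' * (P'\<^sup>T * Pt))"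
    using mult_split_identity[OF P P' P_split, of Pt] by simp
  also have "E * (Qt * St\<^sup>T) = E * (Q * (Q\<^sup>T * (Qt * St\<^sup>T)) + Q' * (Q'\<^sup>T * (Qt * St\<^sup>T)))"
    using mult_split_identity[OF Q Q' Q_split, of "Qt * St\<^sup>T"] by simp
  finally show ?thesis
    by (simp add: mat_normalize) (intro eq_matI; simp add: algebra_simps)
qed

lemma mult_diagonal_index:
  fixes M S :: "'a::semiring_0 mat"
  assumes "diagonal_mat S" "dim_col M = dim_row S" "i < dim_row M" "j < dim_col S"
  shows "(M * S) $$ (i,j) = (if j < dim_row S then M $$ (i,j) * S $$ (j,j) else 0)"
proof -
  have "(M * S) $$ (i,j) = (\<Sum>k<dim_row S. M $$ (i,k) * S $$ (k,j))"
    using assms by (auto simp: scalar_prod_def atLeast0LessThan intro!: sum.cong)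
  also have "\<dots> = (\<Sum>k<dim_row S. if k = j then M $$ (i,j) * S $$ (j,j) else 0)"
    using assms(1,4) by (intro sum.cong) (auto simp: diagonal_mat_def)
  finally show ?thesis by simp
qed

lemma diagonal_mult_index:
  fixes M S :: "'a::semiring_0 mat"
  assumes "diagonal_mat S" "dim_col S = dim_row M" "i < dim_row S" "j < dim_col M"
  shows "(S * M) $$ (i,j) = (if i < dim_col S then S $$ (i,i) * M $$ (i,j) else 0)"
proof -
  have "(S * M) $$ (i,j) = (\<Sum>k<dim_col S. S $$ (i,k) * M $$ (k,j))"
    using assms by (auto simp: scalar_prod_def atLeast0LessThan intro!: sum.cong)
  also have "\<dots> = (\<Sum>k<dim_col S. if k = i then S $$ (i,i) * M $$ (i,j) else 0)"
    using assms(1,3) by (intro sum.cong) (auto simp: diagonal_mat_def)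
  finally show ?thesis by simp
qed

lemma diagonal_mat_transpose: "diagonal_mat S \<Longrightarrow> diagonal_mat S\<^sup>T"
  by (simp add: diagonal_mat_def)

lemma diagonal_mat_gram:
  fixes S :: "'a::comm_semiring_1 mat"
  assumes "diagonal_mat S"
  shows "diagonal_mat (S * S\<^sup>T)"
    and "i < dim_row S \<Longrightarrow> (S * S\<^sup>T) $$ (i,i) = (if i < dim_col S then (S $$ (i,i))\<^sup>2 else 0)"
  using assms mult_diagonal_index[OF diagonal_mat_transpose[OF assms], of S]
  by (auto simp: diagonal_mat_def power2_eq_square)

lemma hadamard_solves_diagonal_sylvester:
  fixes X R H E F :: "real mat"
  assumes X: "X \<in> carrier_mat p s" and R: "R \<in> carrier_mat p s" and H: "H \<in> carrier_mat p s"
    and E: "E \<in> carrier_mat p p" "diagonal_mat E" and F: "F \<in> carrier_mat s s" "diagonal_mat F"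
    and sylvester: "X * F = E * X + R"
    and H_inv: "\<And>i j. i < p \<Longrightarrow> j < s \<Longrightarrow> H $$ (i,j) * (F $$ (j,j) - E $$ (i,i)) = 1"
  shows "X = H \<circ>\<^sub>h R"
proof (rule eq_matI)
  fix i j assume "i < dim_row (H \<circ>\<^sub>h R)" "j < dim_col (H \<circ>\<^sub>h R)"
  then have ij: "i < p" "j < s" using H by simp_all
  have "(X * F) $$ (i,j) = X $$ (i,j) * F $$ (j,j)"
    using mult_diagonal_index[of F X i j] ij X F by simp
  moreover have "(E * X) $$ (i,j) = E $$ (i,i) * X $$ (i,j)"
    using diagonal_mult_index[of E X i j] ij X E by simp
  ultimately have "X $$ (i,j) * F $$ (j,j) = E $$ (i,i) * X $$ (i,j) + R $$ (i,j)"
    using arg_cong[OF sylvester, of "\<lambda>M. M $$ (i,j)"] ij X R E by simp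
  then have "R $$ (i,j) = X $$ (i,j) * (F $$ (j,j) - E $$ (i,i))"
    by (simp add: algebra_simps)
  then show "X $$ (i,j) = (H \<circ>\<^sub>h R) $$ (i,j)"
    using H_inv[OF ij] ij H by (simp add: hadamard_def)
qed (use X H in simp_all)

lemma singular_subspaces_fixed_point:
  fixes A E P P' Q Q' Pt Qt S St H :: "real mat"
  assumes A: "A \<in> carrier_mat n m" and E: "E \<in> carrier_mat n m"
    and P: "P \<in> carrier_mat n p" and P': "P' \<in> carrier_mat n p'"
    and Q: "Q \<in> carrier_mat m q" and Q': "Q' \<in> carrier_mat m q'"
    and Pt: "Pt \<in> carrier_mat n s" and Qt: "Qt \<in> carrier_mat m t"
    and S: "S \<in> carrier_mat p q" and St: "St \<in> carrier_mat s t"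
    and AQ: "A * Q = P * S" and AP: "A\<^sup>T * P = Q * S\<^sup>T"
    and AQt: "(A + E) * Qt = Pt * St" and APt: "(A + E)\<^sup>T * Pt = Qt * St\<^sup>T"
    and P_split: "P * P\<^sup>T + P' * P'\<^sup>T = 1\<^sub>m n" and Q_split: "Q * Q\<^sup>T + Q' * Q'\<^sup>T = 1\<^sub>m m"
    and S_diag: "diagonal_mat S" and St_diag: "diagonal_mat St"
    and H: "H \<in> carrier_mat p s"
    and H_inv: "\<And>i j. i < p \<Longrightarrow> j < s \<Longrightarrow> H $$ (i,j) * ((St * St\<^sup>T) $$ (j,j) - (S * S\<^sup>T) $$ (i,i)) = 1"
  shows "P\<^sup>T * Pt = H \<circ>\<^sub>h (S * (P\<^sup>T * E * Q)\<^sup>T * (P\<^sup>T * Pt)) + H \<circ>\<^sub>h (P\<^sup>T * E * Q * (Q\<^sup>T * Qt) * St\<^sup>T)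
      + H \<circ>\<^sub>h (S * (P'\<^sup>T * E * Q)\<^sup>T * P'\<^sup>T * Pt + P\<^sup>T * E * Q' * Q'\<^sup>T * Qt * St\<^sup>T)"
proof -
  note dims[simp] = carrier_matD[OF A] carrier_matD[OF E] carrier_matD[OF P] carrier_matD[OF P']
    carrier_matD[OF Q] carrier_matD[OF Q'] carrier_matD[OF Pt] carrier_matD[OF Qt]
    carrier_matD[OF S] carrier_matD[OF St] carrier_matD[OF H]
  have "P\<^sup>T * Pt = H \<circ>\<^sub>h (S * (P\<^sup>T * E * Q)\<^sup>T * (P\<^sup>T * Pt) + P\<^sup>T * E * Q * (Q\<^sup>T * Qt) * St\<^sup>T
      + (S * (P'\<^sup>T * E * Q)\<^sup>T * P'\<^sup>T * Pt + P\<^sup>T * E * Q' * Q'\<^sup>T * Qt * St\<^sup>T))"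
    using singular_subspaces_sylvester[OF A E P P' Q Q' Pt Qt S St AQ AP AQt APt P_split Q_split]
      H_inv S_diag St_diag
    by (intro hadamard_solves_diagonal_sylvester[where E = "S * S\<^sup>T" and F = "St * St\<^sup>T"])
      (auto intro: diagonal_mat_gram)
  then show ?thesis
    by (simp add: hadamard_add)
qed

lemma singular_subspaces_fixed_points:
  fixes A E P P' Q Q' Pt Qt S St H K :: "real mat"
  assumes A: "A \<in> carrier_mat n m" and E: "E \<in> carrier_mat n m"
    and P: "P \<in> carrier_mat n p" and P': "P' \<in> carrier_mat n p'"
    and Q: "Q \<in> carrier_mat m q" and Q': "Q' \<in> carrier_mat m q'"
    and Pt: "Pt \<in> carrier_mat n s" and Qt: "Qt \<in> carrier_mat m t"
    and S: "S \<in> carrier_mat p q" and St: "St \<in> carrier_mat s t"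
    and AQ: "A * Q = P * S" and AP: "A\<^sup>T * P = Q * S\<^sup>T"
    and AQt: "(A + E) * Qt = Pt * St" and APt: "(A + E)\<^sup>T * Pt = Qt * St\<^sup>T"
    and P_split: "P * P\<^sup>T + P' * P'\<^sup>T = 1\<^sub>m n" and Q_split: "Q * Q\<^sup>T + Q' * Q'\<^sup>T = 1\<^sub>m m"
    and S_diag: "diagonal_mat S" and St_diag: "diagonal_mat St"
    and H: "H \<in> carrier_mat p s" and K: "K \<in> carrier_mat q t"
    and H_inv: "\<And>i j. i < p \<Longrightarrow> j < s \<Longrightarrow> H $$ (i,j) * ((St * St\<^sup>T) $$ (j,j) - (S * S\<^sup>T) $$ (i,i)) = 1"
    and K_inv: "\<And>i j. i < q \<Longrightarrow> j < t \<Longrightarrow> K $$ (i,j) * ((St\<^sup>T * St) $$ (j,j) - (S\<^sup>T * S) $$ (i,i)) = 1"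
  defines "B11 \<equiv> P\<^sup>T * E * Q" and "B12 \<equiv> P\<^sup>T * E * Q'" and "B21 \<equiv> P'\<^sup>T * E * Q"
  shows "P\<^sup>T * Pt = H \<circ>\<^sub>h (S * B11\<^sup>T * (P\<^sup>T * Pt)) + H \<circ>\<^sub>h (B11 * (Q\<^sup>T * Qt) * St\<^sup>T)
      + H \<circ>\<^sub>h (S * B21\<^sup>T * P'\<^sup>T * Pt + B12 * Q'\<^sup>T * Qt * St\<^sup>T)"
    and "Q\<^sup>T * Qt = K \<circ>\<^sub>h (S\<^sup>T * B11 * (Q\<^sup>T * Qt)) + K \<circ>\<^sub>h (B11\<^sup>T * (P\<^sup>T * Pt) * St)
      + K \<circ>\<^sub>h (S\<^sup>T * B12 * Q'\<^sup>T * Qt + B21\<^sup>T * P'\<^sup>T * Pt * St)"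
proof -
  note dims[simp] = carrier_matD[OF A] carrier_matD[OF E] carrier_matD[OF P] carrier_matD[OF P']
    carrier_matD[OF Q] carrier_matD[OF Q'] carrier_matD[OF Pt] carrier_matD[OF Qt]
    carrier_matD[OF S] carrier_matD[OF St]
  show "P\<^sup>T * Pt = H \<circ>\<^sub>h (S * B11\<^sup>T * (P\<^sup>T * Pt)) + H \<circ>\<^sub>h (B11 * (Q\<^sup>T * Qt) * St\<^sup>T)
      + H \<circ>\<^sub>h (S * B21\<^sup>T * P'\<^sup>T * Pt + B12 * Q'\<^sup>T * Qt * St\<^sup>T)"
    unfolding B11_def B12_def B21_def
    by (rule singular_subspaces_fixed_point[OF A E P P' Q Q' Pt Qt S St AQ AP AQt APt
          P_split Q_split S_diag St_diag H H_inv])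
  \<comment> \<open>the second identity is the first one for the transposed problem\<close>
  have "Q\<^sup>T * Qt = K \<circ>\<^sub>h (S\<^sup>T * (Q\<^sup>T * E\<^sup>T * P)\<^sup>T * (Q\<^sup>T * Qt)) + K \<circ>\<^sub>h (Q\<^sup>T * E\<^sup>T * P * (P\<^sup>T * Pt) * St\<^sup>T\<^sup>T)
      + K \<circ>\<^sub>h (S\<^sup>T * (Q'\<^sup>T * E\<^sup>T * P)\<^sup>T * Q'\<^sup>T * Qt + Q\<^sup>T * E\<^sup>T * P' * P'\<^sup>T * Pt * St\<^sup>T\<^sup>T)"
  proof (rule singular_subspaces_fixed_point[of "A\<^sup>T" m n "E\<^sup>T" Q q Q' q' P p P' p' Qt t Pt s])
    show "(A\<^sup>T + E\<^sup>T) * Pt = Qt * St\<^sup>T" "(A\<^sup>T + E\<^sup>T)\<^sup>T * Qt = Pt * St\<^sup>T\<^sup>T"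
      using AQt APt by (simp_all add: mat_normalize)
  qed (use assms in \<open>simp_all add: diagonal_mat_transpose\<close>)
  then show "Q\<^sup>T * Qt = K \<circ>\<^sub>h (S\<^sup>T * B11 * (Q\<^sup>T * Qt)) + K \<circ>\<^sub>h (B11\<^sup>T * (P\<^sup>T * Pt) * St)
      + K \<circ>\<^sub>h (S\<^sup>T * B12 * Q'\<^sup>T * Qt + B21\<^sup>T * P'\<^sup>T * Pt * St)"
    unfolding B11_def B12_def B21_def by (simp add: mat_normalize)
qed

section \<open>Blocks of a full singular value decomposition\<close>

lemma dim_blocks[simp]:
  "dim_row (cols_first M r) = dim_row M" "dim_col (cols_first M r) = r"
  "dim_row (cols_last M r) = dim_row M" "dim_col (cols_last M r) = dim_col M - r"
  "dim_row (block_tl M r) = r" "dim_col (block_tl M r) = r"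
  "dim_row (block_br M r) = dim_row M - r" "dim_col (block_br M r) = dim_col M - r"
  by (simp_all add: cols_first_def cols_last_def block_tl_def block_br_def)

lemma cols_first_mult: "r \<le> dim_col N \<Longrightarrow> cols_first (M * N) r = M * cols_first N r"
  by (intro eq_matI) (auto simp: cols_first_def scalar_prod_def)

lemma cols_last_mult: "cols_last (M * N) r = M * cols_last N r"
  by (intro eq_matI) (auto simp: cols_last_def scalar_prod_def)

lemma block_tl_transpose:
  "r \<le> dim_row S \<Longrightarrow> r \<le> dim_col S \<Longrightarrow> block_tl S\<^sup>T r = (block_tl S r)\<^sup>T"
  by (intro eq_matI) (auto simp: block_tl_def)

lemma block_br_transpose: "block_br S\<^sup>T r = (block_br S r)\<^sup>T"
  by (intro eq_matI) (auto simp: block_br_def)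

lemma diagonal_mat_block_tl: "diagonal_mat S \<Longrightarrow> r \<le> dim_row S \<Longrightarrow> r \<le> dim_col S \<Longrightarrow> diagonal_mat (block_tl S r)"
  by (auto simp: diagonal_mat_def block_tl_def)

lemma diagonal_mat_block_br: "diagonal_mat S \<Longrightarrow> diagonal_mat (block_br S r)"
  by (auto simp: diagonal_mat_def block_br_def)

lemma cols_first_mult_diagonal:
  assumes S: "diagonal_mat S" "dim_col M = dim_row S" and r: "r \<le> dim_row S" "r \<le> dim_col S"
  shows "cols_first (M * S) r = cols_first M r * block_tl S r"
proof (rule eq_matI)
  fix i j assume "i < dim_row (cols_first M r * block_tl S r)" "j < dim_col (cols_first M r * block_tl S r)"
  then have ij: "i < dim_row M" "j < r" by simp_all
  have "(cols_first M r * block_tl S r) $$ (i,j) = cols_first M r $$ (i,j) * block_tl S r $$ (j,j)"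
    using mult_diagonal_index[OF diagonal_mat_block_tl[OF S(1) r], of "cols_first M r" i j] ij
    by (simp del: index_mult_mat(1))
  moreover have "(M * S) $$ (i,j) = M $$ (i,j) * S $$ (j,j)"
    using mult_diagonal_index[OF S, of i j] ij r by (simp del: index_mult_mat(1))
  ultimately show "cols_first (M * S) r $$ (i,j) = (cols_first M r * block_tl S r) $$ (i,j)"
    using ij r by (simp add: cols_first_def block_tl_def del: index_mult_mat(1))
qed simp_all

lemma cols_last_mult_diagonal:
  assumes S: "diagonal_mat S" "dim_col M = dim_row S"
  shows "cols_last (M * S) r = cols_last M r * block_br S r"
proof (rule eq_matI)
  fix i j assume "i < dim_row (cols_last M r * block_br S r)" "j < dim_col (cols_last M r * block_br S r)"
  then have ij: "i < dim_row M" "j < dim_col S - r" by simp_all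
  have "(cols_last M r * block_br S r) $$ (i,j)
      = (if j < dim_row S - r then cols_last M r $$ (i,j) * block_br S r $$ (j,j) else 0)"
    using mult_diagonal_index[OF diagonal_mat_block_br[OF S(1), of r], of "cols_last M r" i j] ij S
    by (simp del: index_mult_mat(1))
  moreover have "(M * S) $$ (i,j + r) = (if j + r < dim_row S then M $$ (i,j + r) * S $$ (j + r,j + r) else 0)"
    using mult_diagonal_index[OF S, of i "j + r"] ij by (simp del: index_mult_mat(1))
  ultimately show "cols_last (M * S) r $$ (i,j) = (cols_last M r * block_br S r) $$ (i,j)"
    using ij S by (simp add: cols_last_def block_br_def less_diff_conv del: index_mult_mat(1))
qed simp_all

lemma gram_cols_split:
  assumes "r \<le> dim_col M"
  shows "M * M\<^sup>T = cols_first M r * (cols_first M r)\<^sup>T + cols_last M r * (cols_last M r)\<^sup>T"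
proof (rule eq_matI)
  fix i j assume ij: "i < dim_row (cols_first M r * (cols_first M r)\<^sup>T + cols_last M r * (cols_last M r)\<^sup>T)"
    "j < dim_col (cols_first M r * (cols_first M r)\<^sup>T + cols_last M r * (cols_last M r)\<^sup>T)"
  define f where "f k = M $$ (i,k) * M $$ (j,k)" for k
  have "(M * M\<^sup>T) $$ (i,j) = (\<Sum>k\<in>{0..<dim_col M}. f k)"
    using ij by (simp add: scalar_prod_def f_def)
  also have "\<dots> = (\<Sum>k\<in>{0..<r}. f k) + (\<Sum>k\<in>{r..<dim_col M}. f k)"
    using assms by (simp add: sum.atLeastLessThan_concat)
  also have "(\<Sum>k\<in>{r..<dim_col M}. f k) = (\<Sum>k\<in>{0..<dim_col M - r}. f (k + r))"
    using assms sum.shift_bounds_nat_ivl[of f 0 r "dim_col M - r"] by simp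
  finally show "(M * M\<^sup>T) $$ (i,j) = (cols_first M r * (cols_first M r)\<^sup>T + cols_last M r * (cols_last M r)\<^sup>T) $$ (i,j)"
    using ij by (simp add: scalar_prod_def f_def cols_first_def cols_last_def)
qed simp_all

lemma is_full_svd_block_carriers:
  assumes "is_full_svd n m A U S V"
  shows "cols_first U r \<in> carrier_mat n r" "cols_last U r \<in> carrier_mat n (n - r)"
    "cols_first V r \<in> carrier_mat m r" "cols_last V r \<in> carrier_mat m (m - r)"
    "block_tl S r \<in> carrier_mat r r" "block_br S r \<in> carrier_mat (n - r) (m - r)"
  using assms by (auto simp: is_full_svd_def intro!: carrier_matI)

lemma is_full_svd_blocks:
  assumes svd: "is_full_svd n m A U S V" and r: "r \<le> n" "r \<le> m"
  shows "A * cols_first V r = cols_first U r * block_tl S r"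
    and "A * cols_last V r = cols_last U r * block_br S r"
    and "A\<^sup>T * cols_first U r = cols_first V r * (block_tl S r)\<^sup>T"
    and "A\<^sup>T * cols_last U r = cols_last V r * (block_br S r)\<^sup>T"
    and "cols_first U r * (cols_first U r)\<^sup>T + cols_last U r * (cols_last U r)\<^sup>T = 1\<^sub>m n"
    and "cols_first V r * (cols_first V r)\<^sup>T + cols_last V r * (cols_last V r)\<^sup>T = 1\<^sub>m m"
    and "cols_last U r * (cols_last U r)\<^sup>T + cols_first U r * (cols_first U r)\<^sup>T = 1\<^sub>m n"
    and "cols_last V r * (cols_last V r)\<^sup>T + cols_first V r * (cols_first V r)\<^sup>T = 1\<^sub>m m"
    and "diagonal_mat (block_tl S r)" and "diagonal_mat (block_br S r)"
proof -
  from svd have A: "A \<in> carrier_mat n m" and U: "U \<in> carrier_mat n n" and S: "S \<in> carrier_mat n m"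
    and V: "V \<in> carrier_mat m m" and UU: "U\<^sup>T * U = 1\<^sub>m n" "U * U\<^sup>T = 1\<^sub>m n"
    and VV: "V\<^sup>T * V = 1\<^sub>m m" "V * V\<^sup>T = 1\<^sub>m m" and S_diag: "diagonal_mat S"
    and A_eq: "A = U * S * V\<^sup>T"
    unfolding is_full_svd_def diagonal_mat_def by auto
  note dims[simp] = carrier_matD[OF A] carrier_matD[OF U] carrier_matD[OF S] carrier_matD[OF V]
  have AV: "A * V = U * S"
    unfolding A_eq by (simp add: mat_normalize VV)
  have AU: "A\<^sup>T * U = V * S\<^sup>T"
    unfolding A_eq by (simp add: mat_normalize UU)
  have St_diag: "diagonal_mat S\<^sup>T"
    by (rule diagonal_mat_transpose[OF S_diag])
  show "A * cols_first V r = cols_first U r * block_tl S r"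
    using r S_diag by (simp flip: cols_first_mult add: AV cols_first_mult_diagonal)
  show "A * cols_last V r = cols_last U r * block_br S r"
    using S_diag by (simp flip: cols_last_mult add: AV cols_last_mult_diagonal)
  show "A\<^sup>T * cols_first U r = cols_first V r * (block_tl S r)\<^sup>T"
    using r St_diag by (simp flip: cols_first_mult block_tl_transpose add: AU cols_first_mult_diagonal)
  show "A\<^sup>T * cols_last U r = cols_last V r * (block_br S r)\<^sup>T"
    using St_diag by (simp flip: cols_last_mult block_br_transpose add: AU cols_last_mult_diagonal)
  show U_split: "cols_first U r * (cols_first U r)\<^sup>T + cols_last U r * (cols_last U r)\<^sup>T = 1\<^sub>m n"
    using r UU by (simp flip: gram_cols_split)
  show V_split: "cols_first V r * (cols_first V r)\<^sup>T + cols_last V r * (cols_last V r)\<^sup>T = 1\<^sub>m m"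
    using r VV by (simp flip: gram_cols_split)
  show "cols_last U r * (cols_last U r)\<^sup>T + cols_first U r * (cols_first U r)\<^sup>T = 1\<^sub>m n"
    using U_split by (subst comm_add_mat[of _ n n]) auto
  show "cols_last V r * (cols_last V r)\<^sup>T + cols_first V r * (cols_first V r)\<^sup>T = 1\<^sub>m m"
    using V_split by (subst comm_add_mat[of _ m m]) auto
  show "diagonal_mat (block_tl S r)" "diagonal_mat (block_br S r)"
    using r S_diag by (simp_all add: diagonal_mat_block_tl diagonal_mat_block_br)
qed

lemma sval_transpose: "sval S\<^sup>T k = sval S k"
  by (simp add: sval_def min.commute)

lemma is_full_svd_sval_nonneg: "is_full_svd n m A U S V \<Longrightarrow> 0 \<le> sval S k"
  by (auto simp: is_full_svd_def sval_def)

lemma is_full_svd_sval_antimono: "is_full_svd n m A U S V \<Longrightarrow> i \<le> j \<Longrightarrow> sval S j \<le> sval S i"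
  by (auto simp: is_full_svd_def sval_def)

lemma gram_block_tl_index:
  assumes "diagonal_mat S" "r \<le> dim_row S" "r \<le> dim_col S" "i < r"
  shows "(block_tl S r * (block_tl S r)\<^sup>T) $$ (i,i) = (sval S i)\<^sup>2"
    and "((block_tl S r)\<^sup>T * block_tl S r) $$ (i,i) = (sval S i)\<^sup>2"
proof -
  have tl: "(block_tl S r * (block_tl S r)\<^sup>T) $$ (i,i) = (sval S i)\<^sup>2"
    if "diagonal_mat S" "r \<le> dim_row S" "r \<le> dim_col S" for S
    using diagonal_mat_gram(2)[OF diagonal_mat_block_tl[OF that], of i] that assms(4)
    by (simp add: block_tl_def sval_def del: index_mult_mat(1))
  show "(block_tl S r * (block_tl S r)\<^sup>T) $$ (i,i) = (sval S i)\<^sup>2"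
    using tl assms by simp
  show "((block_tl S r)\<^sup>T * block_tl S r) $$ (i,i) = (sval S i)\<^sup>2"
    using tl[of "S\<^sup>T"] assms by (simp add: diagonal_mat_transpose block_tl_transpose sval_transpose)
qed

lemma gram_block_br_index:
  assumes "diagonal_mat S"
  shows "i < dim_row S - r \<Longrightarrow> (block_br S r * (block_br S r)\<^sup>T) $$ (i,i) = (sval S (r + i))\<^sup>2"
    and "i < dim_col S - r \<Longrightarrow> ((block_br S r)\<^sup>T * block_br S r) $$ (i,i) = (sval S (r + i))\<^sup>2"
proof -
  have br: "(block_br S r * (block_br S r)\<^sup>T) $$ (i,i) = (sval S (r + i))\<^sup>2"
    if "diagonal_mat S" "i < dim_row S - r" for S
  proof -
    have "(block_br S r * (block_br S r)\<^sup>T) $$ (i,i)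
        = (if i < dim_col S - r then (block_br S r $$ (i,i))\<^sup>2 else 0)"
      using diagonal_mat_gram(2)[OF diagonal_mat_block_br[OF that(1)], of i] that
      by (simp del: index_mult_mat(1))
    also have "\<dots> = (sval S (r + i))\<^sup>2"
      using that by (auto simp: block_br_def sval_def ac_simps)
    finally show ?thesis .
  qed
  show "i < dim_row S - r \<Longrightarrow> (block_br S r * (block_br S r)\<^sup>T) $$ (i,i) = (sval S (r + i))\<^sup>2"
    using br assms by simp
  show "i < dim_col S - r \<Longrightarrow> ((block_br S r)\<^sup>T * block_br S r) $$ (i,i) = (sval S (r + i))\<^sup>2"
    using br[of "S\<^sup>T"] assms by (simp add: diagonal_mat_transpose block_br_transpose sval_transpose)
qed

lemma is_full_svd_sval_square_gap:
  assumes "is_full_svd n m A U S V" "is_full_svd n m B W T Z"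
    and gap: "sval S r < sval T (r - 1)" and "j < r" "r \<le> k"
  shows "(sval S k)\<^sup>2 < (sval T j)\<^sup>2"
proof -
  have "sval S k < sval T j"
    using is_full_svd_sval_antimono[OF assms(1), of r k] is_full_svd_sval_antimono[OF assms(2), of j "r - 1"]
      gap assms(4,5) by linarith
  then show ?thesis
    using is_full_svd_sval_nonneg[OF assms(1)] by (intro power_strict_mono) auto
qed

lemma F12_carrier: "F12 p r S St \<in> carrier_mat r (p - r)"
  by (simp add: F12_def)

lemma F21_carrier: "F21 p r S St \<in> carrier_mat (p - r) r"
  by (simp add: F21_def)

lemma F21_gram_gap:
  assumes svd: "is_full_svd n m A U S V" "is_full_svd n m B Ut St Vt" and r: "r \<le> n" "r \<le> m"
    and gap: "sval S r < sval St (r - 1)"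
  shows "\<And>i j. i < n - r \<Longrightarrow> j < r \<Longrightarrow> F21 n r S St $$ (i,j) *
      ((block_tl St r * (block_tl St r)\<^sup>T) $$ (j,j) - (block_br S r * (block_br S r)\<^sup>T) $$ (i,i)) = 1"
    and "\<And>i j. i < m - r \<Longrightarrow> j < r \<Longrightarrow> F21 m r S St $$ (i,j) *
      (((block_tl St r)\<^sup>T * block_tl St r) $$ (j,j) - ((block_br S r)\<^sup>T * block_br S r) $$ (i,i)) = 1"
proof -
  have S_St: "S \<in> carrier_mat n m" "St \<in> carrier_mat n m" "diagonal_mat S" "diagonal_mat St"
    using svd unfolding is_full_svd_def diagonal_mat_def by auto
  have "(sval St j)\<^sup>2 - (sval S (r + i))\<^sup>2 \<noteq> 0" if "j < r" for i j
    using is_full_svd_sval_square_gap[OF svd gap that, of "r + i"] by simp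
  then show "\<And>i j. i < n - r \<Longrightarrow> j < r \<Longrightarrow> F21 n r S St $$ (i,j) *
      ((block_tl St r * (block_tl St r)\<^sup>T) $$ (j,j) - (block_br S r * (block_br S r)\<^sup>T) $$ (i,i)) = 1"
    and "\<And>i j. i < m - r \<Longrightarrow> j < r \<Longrightarrow> F21 m r S St $$ (i,j) *
      (((block_tl St r)\<^sup>T * block_tl St r) $$ (j,j) - ((block_br S r)\<^sup>T * block_br S r) $$ (i,i)) = 1"
    using S_St r by (auto simp: F21_def gram_block_tl_index gram_block_br_index simp del: index_mult_mat(1))
qed

lemma F12_gram_gap:
  assumes svd: "is_full_svd n m A U S V" "is_full_svd n m B Ut St Vt" and r: "r \<le> n" "r \<le> m"
    and gap: "sval St r < sval S (r - 1)"
  shows "\<And>i j. i < r \<Longrightarrow> j < n - r \<Longrightarrow> F12 n r S St $$ (i,j) *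
      ((block_br St r * (block_br St r)\<^sup>T) $$ (j,j) - (block_tl S r * (block_tl S r)\<^sup>T) $$ (i,i)) = 1"
    and "\<And>i j. i < r \<Longrightarrow> j < m - r \<Longrightarrow> F12 m r S St $$ (i,j) *
      (((block_br St r)\<^sup>T * block_br St r) $$ (j,j) - ((block_tl S r)\<^sup>T * block_tl S r) $$ (i,i)) = 1"
proof -
  have S_St: "S \<in> carrier_mat n m" "St \<in> carrier_mat n m" "diagonal_mat S" "diagonal_mat St"
    using svd unfolding is_full_svd_def diagonal_mat_def by auto
  have "(sval St (r + j))\<^sup>2 - (sval S i)\<^sup>2 \<noteq> 0" if "i < r" for i j
    using is_full_svd_sval_square_gap[OF svd(2,1) gap that, of "r + j"] by simp
  then show "\<And>i j. i < r \<Longrightarrow> j < n - r \<Longrightarrow> F12 n r S St $$ (i,j) *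
      ((block_br St r * (block_br St r)\<^sup>T) $$ (j,j) - (block_tl S r * (block_tl S r)\<^sup>T) $$ (i,i)) = 1"
    and "\<And>i j. i < r \<Longrightarrow> j < m - r \<Longrightarrow> F12 m r S St $$ (i,j) *
      (((block_br St r)\<^sup>T * block_br St r) $$ (j,j) - ((block_tl S r)\<^sup>T * block_tl S r) $$ (i,i)) = 1"
    using S_St r by (auto simp: F12_def gram_block_tl_index gram_block_br_index simp del: index_mult_mat(1))
qed

theorem theorem2p7:
  fixes n m r :: nat and A dA U S V Ut St Vt :: "real mat"
  assumes dims: "A \<in> carrier_mat n m" "dA \<in> carrier_mat n m"
    and r_pos: "1 \<le> r"
    and rank: "vec_space.rank n A \<ge> r"
    and svdA: "is_full_svd n m A U S V"
    and svdAt: "is_full_svd n m (A + dA) Ut St Vt"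
    and gap1: "sval S (r-1) - sval St r > 0"
    and gap2: "sval St (r-1) - sval S r > 0"
  defines "U1 \<equiv> cols_first U r" and "U2 \<equiv> cols_last U r"
    and "V1 \<equiv> cols_first V r" and "V2 \<equiv> cols_last V r"
    and "Ut1 \<equiv> cols_first Ut r" and "Ut2 \<equiv> cols_last Ut r"
    and "Vt1 \<equiv> cols_first Vt r" and "Vt2 \<equiv> cols_last Vt r"
    and "S1 \<equiv> block_tl S r" and "S2 \<equiv> block_br S r"
    and "St1 \<equiv> block_tl St r" and "St2 \<equiv> block_br St r"
  defines "FU12 \<equiv> F12 n r S St" and "FU21 \<equiv> F21 n r S St"
    and "FV12 \<equiv> F12 m r S St" and "FV21 \<equiv> F21 m r S St"
  defines "a11 \<equiv> transpose_mat U1 * dA * V1" and "a12 \<equiv> transpose_mat U1 * dA * V2"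
    and "a21 \<equiv> transpose_mat U2 * dA * V1" and "a22 \<equiv> transpose_mat U2 * dA * V2"
  defines "\<F> \<equiv> (\<lambda>(X1, X2).
           (FU21 \<circ>\<^sub>h (S2 * transpose_mat a22 * X1) + FU21 \<circ>\<^sub>h (a22 * X2 * transpose_mat St1),
            FV21 \<circ>\<^sub>h (transpose_mat a22 * X1 * St1) + FV21 \<circ>\<^sub>h (transpose_mat S2 * a22 * X2)))"
    and "\<G> \<equiv> (\<lambda>(X3, X4).
           (FU12 \<circ>\<^sub>h (a11 * X4 * transpose_mat St2) + FU12 \<circ>\<^sub>h (S1 * transpose_mat a11 * X3),
            FV12 \<circ>\<^sub>h (transpose_mat S1 * a11 * X4) + FV12 \<circ>\<^sub>h (transpose_mat a11 * X3 * St2)))"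
  defines "C1 \<equiv> FU21 \<circ>\<^sub>h (S2 * transpose_mat a12 * transpose_mat U1 * Ut1
                        + a21 * transpose_mat V1 * Vt1 * transpose_mat St1)"
    and "C2 \<equiv> FV21 \<circ>\<^sub>h (transpose_mat a12 * transpose_mat U1 * Ut1 * St1
                        + transpose_mat S2 * a21 * transpose_mat V1 * Vt1)"
    and "C3 \<equiv> FU12 \<circ>\<^sub>h (a12 * transpose_mat V2 * Vt2 * transpose_mat St2
                        + S1 * transpose_mat a21 * transpose_mat U2 * Ut2)"
    and "C4 \<equiv> FV12 \<circ>\<^sub>h (transpose_mat S1 * a12 * transpose_mat V2 * Vt2
                        + transpose_mat a21 * transpose_mat U2 * Ut2 * St2)"
    and "DF \<equiv> carrier_mat (n - r) r \<times> carrier_mat (m - r) r"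
    and "DG \<equiv> carrier_mat r (n - r) \<times> carrier_mat r (m - r)"
  assumes normF: "op_norm DF \<F> < 1"
    and normG: "op_norm DG \<G> < 1"
  shows "mat_sums (\<lambda>k. fst ((\<F> ^^ k) (C1, C2))) (transpose_mat U2 * Ut1)
       \<and> mat_sums (\<lambda>k. snd ((\<F> ^^ k) (C1, C2))) (transpose_mat V2 * Vt1)
       \<and> mat_sums (\<lambda>k. fst ((\<G> ^^ k) (C3, C4))) (transpose_mat U1 * Ut2)
       \<and> mat_sums (\<lambda>k. snd ((\<G> ^^ k) (C3, C4))) (transpose_mat V1 * Vt2)"
proof -
  have r: "r \<le> n" "r \<le> m"
    using gap1 is_full_svd_sval_nonneg[OF svdAt, of r] svdA
    by (auto simp: sval_def is_full_svd_def split: if_splits)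
  have gaps: "sval S r < sval St (r - 1)" "sval St r < sval S (r - 1)"
    using gap1 gap2 by simp_all
  note blocks = is_full_svd_block_carriers[OF svdA, of r, folded U1_def U2_def V1_def V2_def S1_def S2_def]
    is_full_svd_block_carriers[OF svdAt, of r, folded Ut1_def Ut2_def Vt1_def Vt2_def St1_def St2_def]
    F12_carrier[of n r S St, folded FU12_def] F12_carrier[of m r S St, folded FV12_def]
    F21_carrier[of n r S St, folded FU21_def] F21_carrier[of m r S St, folded FV21_def]
  note [simp] = blocks[THEN carrier_matD(1)] blocks[THEN carrier_matD(2)] carrier_matD[OF dims(1)]
  note svd_blocks = is_full_svd_blocks[OF svdA r, folded U1_def U2_def V1_def V2_def S1_def S2_def]
    is_full_svd_blocks[OF svdAt r, folded Ut1_def Ut2_def Vt1_def Vt2_def St1_def St2_def]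
    F21_gram_gap[OF svdA svdAt r gaps(1), folded FU21_def FV21_def S2_def St1_def]
    F12_gram_gap[OF svdA svdAt r gaps(2), folded FU12_def FV12_def S1_def St2_def]
  have F_fixed: "(transpose_mat U2 * Ut1, transpose_mat V2 * Vt1)
      = \<F> (transpose_mat U2 * Ut1, transpose_mat V2 * Vt1) + (C1, C2)"
    using singular_subspaces_fixed_points[where P = U2 and P' = U1 and Q = V2 and Q' = V1
        and Pt = Ut1 and Qt = Vt1 and S = S2 and St = St1 and H = FU21 and K = FV21]
      dims blocks svd_blocks
    unfolding \<F>_def C1_def C2_def a22_def a21_def a12_def by (simp add: hadamard_sum_swap)
  have G_fixed: "(transpose_mat U1 * Ut2, transpose_mat V1 * Vt2)
      = \<G> (transpose_mat U1 * Ut2, transpose_mat V1 * Vt2) + (C3, C4)"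
    using singular_subspaces_fixed_points[where P = U1 and P' = U2 and Q = V1 and Q' = V2
        and Pt = Ut2 and Qt = Vt2 and S = S1 and St = St2 and H = FU12 and K = FV12]
      dims blocks svd_blocks
    unfolding \<G>_def C3_def C4_def a11_def a21_def a12_def by (simp add: hadamard_sum_swap)
  have linear: "mat_bounded_linear_on DF (n - r) r (\<lambda>Z. fst (\<F> Z))"
    "mat_bounded_linear_on DF (m - r) r (\<lambda>Z. snd (\<F> Z))"
    "mat_bounded_linear_on DG r (n - r) (\<lambda>Z. fst (\<G> Z))"
    "mat_bounded_linear_on DG r (m - r) (\<lambda>Z. snd (\<G> Z))"
    unfolding \<F>_def \<G>_def DF_def DG_def split_beta fst_conv snd_conv
    by (rule mat_bounded_linear_on_intros | simp add: a11_def a22_def carrier_matI)+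
  have F_dom: "(transpose_mat U2 * Ut1, transpose_mat V2 * Vt1) \<in> DF" "(C1, C2) \<in> DF"
    and G_dom: "(transpose_mat U1 * Ut2, transpose_mat V1 * Vt2) \<in> DG" "(C3, C4) \<in> DG"
    unfolding DF_def DG_def C1_def C2_def C3_def C4_def by (auto intro!: carrier_matI)
  show ?thesis
    using neumann_series_mat_pairs[OF linear(1,2)[unfolded DF_def] normF[unfolded DF_def]
        F_dom[unfolded DF_def] F_fixed]
      neumann_series_mat_pairs[OF linear(3,4)[unfolded DG_def] normG[unfolded DG_def]
        G_dom[unfolded DG_def] G_fixed]
    by simp
qed

end
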